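(* An effect algebra $A$ is (the effect algebra of) a Boolean algebra if and only if the category $\int R(A)$ is filtered.
   Context: An effect algebra is a partial algebra $(A;+,0,1)$, with a binary partial operation $+$ and constants $0,1$, satisfying: (E1) if $a+b$ is defined, then $b+a$ is defined and $a+b=b+a$; (E2) if $a+b$ and $(a+b)+c$ are defined, then $b+c$ and $a+(b+c)$ are defined and $(a+b)+c=a+(b+c)$; (E3) for every $a$ there is a unique $a^\perp$ such that $a+a^\perp=1$; (E4) if $a+1$ is defined, then $a=0$. One-element effect algebras are allowed. Morphisms of effect algebras preserve $1$ and defined sums. Every Boolean algebra is an effect algebra via: $x+y$ is defined iff $x\wedge y=0$, and then $x+y=x\vee y$. "$A$ is a Boolean algebra" means $A$ arises this way from a Boolean algebra. For $[n]=\{1,\dots,n\}$, $\mathbf{FinBool}$ is the full subcategory of Boolean algebras on the objects $2^{[n]}$, $n\in\mathbb N$. The category $\int R(A)$ has: - objects: pairs $(2^{[n]},g)$ with $g\colon 2^{[n]}\to A$ an effect-algebra morphism; - arrows $(2^{[n]},g)\to(2^{[n']},g')$: Boolean algebra morphisms $f\colon 2^{[n]}\to 2^{[n']}$ with $g'\circ f=g$. A category is filtered if it satisfies all three of: - it is nonempty; - every two objects admit a cospan $X_1\to X\leftarrow X_2$; - every parallel pair $f_1,f_2\colon X\to Y$ admits $q\colon Y\to Z$ with $q\circ f_1=q\circ f_2$. *)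

theory Defs
  imports Main
begin

text \<open>An effect algebra is given by a carrier set A, a partial binary operation
  (as an option-valued function: None = undefined), and constants z (zero), u (one).\<close>

definition effect_algebra ::
  "'a set \<Rightarrow> ('a \<Rightarrow> 'a \<Rightarrow> 'a option) \<Rightarrow> 'a \<Rightarrow> 'a \<Rightarrow> bool" where
  "effect_algebra A pl z u \<longleftrightarrow>
     z \<in> A \<and> u \<in> A \<and>
     (\<forall>a\<in>A. \<forall>b\<in>A. \<forall>c. pl a b = Some c \<longrightarrow> c \<in> A) \<and>
     \<comment> \<open>(E1)\<close>
     (\<forall>a\<in>A. \<forall>b\<in>A. \<forall>c. pl a b = Some c \<longrightarrow> pl b a = Some c) \<and>
     \<comment> \<open>(E2)\<close>
     (\<forall>a\<in>A. \<forall>b\<in>A. \<forall>c\<in>A. \<forall>d e. pl a b = Some d \<and> pl d c = Some e \<longrightarrow>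
        (\<exists>f. pl b c = Some f \<and> pl a f = Some e)) \<and>
     \<comment> \<open>(E3)\<close>
     (\<forall>a\<in>A. \<exists>!b. b \<in> A \<and> pl a b = Some u) \<and>
     \<comment> \<open>(E4)\<close>
     (\<forall>a\<in>A. pl a u \<noteq> None \<longrightarrow> a = z)"

definition boolean_algebra_on ::
  "'a set \<Rightarrow> ('a \<Rightarrow> 'a \<Rightarrow> 'a) \<Rightarrow> ('a \<Rightarrow> 'a \<Rightarrow> 'a) \<Rightarrow> ('a \<Rightarrow> 'a) \<Rightarrow> 'a \<Rightarrow> 'a \<Rightarrow> bool" where
  "boolean_algebra_on A mt jn cp bt tp \<longleftrightarrow>
     bt \<in> A \<and> tp \<in> A \<and>
     (\<forall>x\<in>A. \<forall>y\<in>A. mt x y \<in> A \<and> jn x y \<in> A) \<and> (\<forall>x\<in>A. cp x \<in> A) \<and>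
     (\<forall>x\<in>A. \<forall>y\<in>A. mt x y = mt y x \<and> jn x y = jn y x) \<and>
     (\<forall>x\<in>A. \<forall>y\<in>A. \<forall>w\<in>A. mt (mt x y) w = mt x (mt y w) \<and> jn (jn x y) w = jn x (jn y w)) \<and>
     (\<forall>x\<in>A. \<forall>y\<in>A. mt x (jn x y) = x \<and> jn x (mt x y) = x) \<and>
     (\<forall>x\<in>A. \<forall>y\<in>A. \<forall>w\<in>A. mt x (jn y w) = jn (mt x y) (mt x w)) \<and>
     (\<forall>x\<in>A. jn x bt = x \<and> mt x tp = x) \<and>
     (\<forall>x\<in>A. mt x (cp x) = bt \<and> jn x (cp x) = tp)"

definition is_boolean_EA ::
  "'a set \<Rightarrow> ('a \<Rightarrow> 'a \<Rightarrow> 'a option) \<Rightarrow> 'a \<Rightarrow> 'a \<Rightarrow> bool" where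
  "is_boolean_EA A pl z u \<longleftrightarrow>
     (\<exists>mt jn cp bt tp. boolean_algebra_on A mt jn cp bt tp \<and> bt = z \<and> tp = u \<and>
        (\<forall>x\<in>A. \<forall>y\<in>A. pl x y = (if mt x y = bt then Some (jn x y) else None)))"

text \<open>The object 2^[n] of FinBool is the powerset of {1..n} with the usual operations.\<close>

definition ea_mor_fin ::
  "'a set \<Rightarrow> ('a \<Rightarrow> 'a \<Rightarrow> 'a option) \<Rightarrow> 'a \<Rightarrow> nat \<Rightarrow> (nat set \<Rightarrow> 'a) \<Rightarrow> bool" where
  "ea_mor_fin A pl u n g \<longleftrightarrow>
     (\<forall>X. X \<subseteq> {1..n} \<longrightarrow> g X \<in> A) \<and> g {1..n} = u \<and>
     (\<forall>X Y. X \<subseteq> {1..n} \<and> Y \<subseteq> {1..n} \<and> X \<inter> Y = {} \<longrightarrow> pl (g X) (g Y) = Some (g (X \<union> Y)))"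

definition bool_mor_fin :: "nat \<Rightarrow> nat \<Rightarrow> (nat set \<Rightarrow> nat set) \<Rightarrow> bool" where
  "bool_mor_fin n m f \<longleftrightarrow>
     (\<forall>X. X \<subseteq> {1..n} \<longrightarrow> f X \<subseteq> {1..m}) \<and>
     f {} = {} \<and> f {1..n} = {1..m} \<and>
     (\<forall>X Y. X \<subseteq> {1..n} \<and> Y \<subseteq> {1..n} \<longrightarrow>
        f (X \<inter> Y) = f X \<inter> f Y \<and> f (X \<union> Y) = f X \<union> f Y) \<and>
     (\<forall>X. X \<subseteq> {1..n} \<longrightarrow> f ({1..n} - X) = {1..m} - f X)"

text \<open>Arrows (2^[n], g) \<rightarrow> (2^[m], h) in \<int>R(A).\<close>
definition intR_arrow ::
  "nat \<Rightarrow> (nat set \<Rightarrow> 'a) \<Rightarrow> nat \<Rightarrow> (nat set \<Rightarrow> 'a) \<Rightarrow> (nat set \<Rightarrow> nat set) \<Rightarrow> bool" where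
  "intR_arrow n g m h f \<longleftrightarrow> bool_mor_fin n m f \<and> (\<forall>X. X \<subseteq> {1..n} \<longrightarrow> h (f X) = g X)"

definition intR_filtered ::
  "'a set \<Rightarrow> ('a \<Rightarrow> 'a \<Rightarrow> 'a option) \<Rightarrow> 'a \<Rightarrow> bool" where
  "intR_filtered A pl u \<longleftrightarrow>
     (\<exists>n g. ea_mor_fin A pl u n g) \<and>
     (\<forall>n1 g1 n2 g2. ea_mor_fin A pl u n1 g1 \<and> ea_mor_fin A pl u n2 g2 \<longrightarrow>
        (\<exists>n g f1 f2. ea_mor_fin A pl u n g \<and>
           intR_arrow n1 g1 n g f1 \<and> intR_arrow n2 g2 n g f2)) \<and>
     (\<forall>n g m h f1 f2. ea_mor_fin A pl u n g \<and> ea_mor_fin A pl u m h \<and>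
        intR_arrow n g m h f1 \<and> intR_arrow n g m h f2 \<longrightarrow>
        (\<exists>k l q. ea_mor_fin A pl u k l \<and> intR_arrow m h k l q \<and>
           (\<forall>X. X \<subseteq> {1..n} \<longrightarrow> q (f1 X) = q (f2 X))))"

end

theory Submission
  imports Defs
begin

(* If A comes from a Boolean algebra, a morphism 2^[n] -> A is the same as a Boolean
   homomorphism, i.e. a partition of 1 into n pairwise disjoint blocks. Two partitions have a
   common refinement, obtained by meeting their blocks pairwise, and a parallel pair of arrows
   into g is coequalised by collapsing all atoms that g sends to 0.

   Conversely, let \<int>R(A) be filtered. Every a is the value at {1} of the partition (a, a') of
   2^[2], where a' is the orthosupplement, and filteredness lets any two representations
   a = g X, b = g Y and a = g' X', b = g' Y' be pushed into a single object where they coincide.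
   Hence meet and join, computed as g (X \<inter> Y) and g (X \<union> Y), do not depend on the
   representation, the Boolean laws transfer from powersets, and representing a sum a + b = e
   by the partition (a, b, e') of 2^[3] shows that + is the join of disjoint elements. *)

locale bool_alg =
  fixes A :: "'a set" and mt jn :: "'a \<Rightarrow> 'a \<Rightarrow> 'a" and cp :: "'a \<Rightarrow> 'a" and bt tp :: 'a
  assumes boolean_algebra: "boolean_algebra_on A mt jn cp bt tp"
begin

lemma bt_in[simp]: "bt \<in> A" and tp_in[simp]: "tp \<in> A"
  and mt_in[simp]: "x \<in> A \<Longrightarrow> y \<in> A \<Longrightarrow> mt x y \<in> A"
  and jn_in[simp]: "x \<in> A \<Longrightarrow> y \<in> A \<Longrightarrow> jn x y \<in> A"
  and mt_commute: "x \<in> A \<Longrightarrow> y \<in> A \<Longrightarrow> mt x y = mt y x"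
  and jn_commute: "x \<in> A \<Longrightarrow> y \<in> A \<Longrightarrow> jn x y = jn y x"
  and mt_assoc: "x \<in> A \<Longrightarrow> y \<in> A \<Longrightarrow> w \<in> A \<Longrightarrow> mt (mt x y) w = mt x (mt y w)"
  and jn_assoc: "x \<in> A \<Longrightarrow> y \<in> A \<Longrightarrow> w \<in> A \<Longrightarrow> jn (jn x y) w = jn x (jn y w)"
  and mt_jn_absorb: "x \<in> A \<Longrightarrow> y \<in> A \<Longrightarrow> mt x (jn x y) = x"
  and jn_mt_absorb: "x \<in> A \<Longrightarrow> y \<in> A \<Longrightarrow> jn x (mt x y) = x"
  and mt_jn_distrib: "x \<in> A \<Longrightarrow> y \<in> A \<Longrightarrow> w \<in> A \<Longrightarrow> mt x (jn y w) = jn (mt x y) (mt x w)"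
  and jn_bt[simp]: "x \<in> A \<Longrightarrow> jn x bt = x"
  and mt_tp[simp]: "x \<in> A \<Longrightarrow> mt x tp = x"
  using boolean_algebra unfolding boolean_algebra_on_def by auto

lemma mt_idem[simp]: "x \<in> A \<Longrightarrow> mt x x = x"
  by (metis mt_jn_absorb jn_mt_absorb mt_in)

lemma jn_idem[simp]: "x \<in> A \<Longrightarrow> jn x x = x"
  by (metis mt_jn_absorb jn_mt_absorb jn_in)

lemma bt_jn[simp]: "x \<in> A \<Longrightarrow> jn bt x = x"
  by (metis jn_bt jn_commute bt_in)

lemma tp_mt[simp]: "x \<in> A \<Longrightarrow> mt tp x = x"
  by (metis mt_tp mt_commute tp_in)

lemma bt_mt[simp]: "x \<in> A \<Longrightarrow> mt bt x = bt"
  by (metis jn_mt_absorb bt_in bt_jn mt_in)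

lemma mt_bt[simp]: "x \<in> A \<Longrightarrow> mt x bt = bt"
  by (metis bt_mt mt_commute bt_in)

lemma jn_mt_distrib: "x \<in> A \<Longrightarrow> y \<in> A \<Longrightarrow> w \<in> A \<Longrightarrow> mt (jn y w) x = jn (mt y x) (mt w x)"
  by (simp add: mt_jn_distrib mt_commute)

lemma jn_left_commute: "x \<in> A \<Longrightarrow> y \<in> A \<Longrightarrow> w \<in> A \<Longrightarrow> jn x (jn y w) = jn y (jn x w)"
  by (metis jn_assoc jn_commute)

lemma mt_left_commute: "x \<in> A \<Longrightarrow> y \<in> A \<Longrightarrow> w \<in> A \<Longrightarrow> mt x (mt y w) = mt y (mt x w)"
  by (metis mt_assoc mt_commute)

lemma jn_jn_swap: "p \<in> A \<Longrightarrow> q \<in> A \<Longrightarrow> a \<in> A \<Longrightarrow> b \<in> A \<Longrightarrow>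
  jn (jn p a) (jn q b) = jn (jn p q) (jn a b)"
  by (simp add: jn_assoc jn_left_commute)

lemma mt_mt_swap: "p \<in> A \<Longrightarrow> q \<in> A \<Longrightarrow> a \<in> A \<Longrightarrow> b \<in> A \<Longrightarrow>
  mt (mt p a) (mt q b) = mt (mt p q) (mt a b)"
  by (simp add: mt_assoc mt_left_commute)

lemma mt_jn_jn: "p \<in> A \<Longrightarrow> q \<in> A \<Longrightarrow> a \<in> A \<Longrightarrow> b \<in> A \<Longrightarrow>
  mt (jn p a) (jn q b) = jn (jn (mt p q) (mt p b)) (jn (mt a q) (mt a b))"
  by (simp add: mt_jn_distrib jn_mt_distrib jn_jn_swap)

lemma mt_jn_common_disjoint:
  "x \<in> A \<Longrightarrow> y \<in> A \<Longrightarrow> c \<in> A \<Longrightarrow> mt x y = bt \<Longrightarrow> mt x c = bt \<Longrightarrow> mt y c = bt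
    \<Longrightarrow> mt (jn x c) (jn y c) = c"
  by (simp add: mt_jn_jn mt_commute[of c])

fun join_upto :: "(nat \<Rightarrow> 'a) \<Rightarrow> nat \<Rightarrow> 'a" where
  "join_upto f 0 = bt"
| "join_upto f (Suc m) = jn (join_upto f m) (f (Suc m))"

lemma join_upto_in: "(\<And>j. j \<in> {1..m} \<Longrightarrow> f j \<in> A) \<Longrightarrow> join_upto f m \<in> A"
  by (induction m) auto

lemma join_upto_cong: "(\<And>j. j \<in> {1..m} \<Longrightarrow> f j = f' j) \<Longrightarrow> join_upto f m = join_upto f' m"
  by (induction m) auto

lemma join_upto_jn:
  "(\<And>j. j \<in> {1..m} \<Longrightarrow> f j \<in> A) \<Longrightarrow> (\<And>j. j \<in> {1..m} \<Longrightarrow> f' j \<in> A) \<Longrightarrow>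
   join_upto (\<lambda>j. jn (f j) (f' j)) m = jn (join_upto f m) (join_upto f' m)"
proof (induction m)
  case (Suc m)
  have "join_upto f m \<in> A" "join_upto f' m \<in> A" using Suc.prems by (auto intro!: join_upto_in)
  then show ?case using Suc by (simp add: jn_jn_swap)
qed simp

lemma join_upto_mt: "c \<in> A \<Longrightarrow> (\<And>j. j \<in> {1..m} \<Longrightarrow> f j \<in> A) \<Longrightarrow>
   join_upto (\<lambda>j. mt c (f j)) m = mt c (join_upto f m)"
proof (induction m)
  case (Suc m)
  have "join_upto f m \<in> A" using Suc.prems by (auto intro!: join_upto_in)
  then show ?case using Suc by (simp add: mt_jn_distrib)
qed simp

lemma join_upto_disjoint_right:
  "b \<in> A \<Longrightarrow> (\<And>j. j \<in> {1..m} \<Longrightarrow> f j \<in> A) \<Longrightarrow> (\<And>j. j \<in> {1..m} \<Longrightarrow> mt (f j) b = bt) \<Longrightarrow>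
   mt (join_upto f m) b = bt"
proof (induction m)
  case (Suc m)
  have "join_upto f m \<in> A" using Suc.prems by (auto intro!: join_upto_in)
  then show ?case using Suc by (simp add: jn_mt_distrib)
qed simp

lemma join_upto_disjoint:
  assumes "\<And>j. j \<in> {1..m} \<Longrightarrow> f j \<in> A" "\<And>j. j \<in> {1..m} \<Longrightarrow> f' j \<in> A"
    and "\<And>j l. j \<in> {1..m} \<Longrightarrow> l \<in> {1..m} \<Longrightarrow> mt (f j) (f' l) = bt"
  shows "mt (join_upto f m) (join_upto f' m) = bt"
  using assms
proof (induction m)
  case (Suc m)
  have in_A: "join_upto f m \<in> A" "join_upto f' m \<in> A" using Suc.prems by (auto intro!: join_upto_in)
  have "mt (join_upto f m) (f' (Suc m)) = bt"
    by (rule join_upto_disjoint_right) (use Suc.prems in auto)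
  moreover have "mt (join_upto f' m) (f (Suc m)) = bt"
  proof (rule join_upto_disjoint_right)
    fix j assume "j \<in> {1..m}"
    then show "mt (f' j) (f (Suc m)) = bt" using Suc.prems mt_commute[of "f (Suc m)" "f' j"] by auto
  qed (use Suc.prems in auto)
  moreover have "mt (join_upto f m) (join_upto f' m) = bt" using Suc by auto
  ultimately show ?case using in_A Suc.prems by (simp add: mt_jn_jn mt_commute[of "f (Suc m)"])
qed simp

end

locale bool_ea = bool_alg +
  fixes pl :: "'a \<Rightarrow> 'a \<Rightarrow> 'a option"
  assumes pl_eq: "x \<in> A \<Longrightarrow> y \<in> A \<Longrightarrow> pl x y = (if mt x y = bt then Some (jn x y) else None)"
begin

abbreviation mor where "mor n g \<equiv> ea_mor_fin A pl tp n g"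

lemma mor_in: "mor n g \<Longrightarrow> X \<subseteq> {1..n} \<Longrightarrow> g X \<in> A"
  unfolding ea_mor_fin_def by auto

lemma mor_top: "mor n g \<Longrightarrow> g {1..n} = tp"
  unfolding ea_mor_fin_def by auto

lemma mor_disjoint:
  assumes "mor n g" "X \<subseteq> {1..n}" "Y \<subseteq> {1..n}" "X \<inter> Y = {}"
  shows "mt (g X) (g Y) = bt" "g (X \<union> Y) = jn (g X) (g Y)"
proof -
  have "pl (g X) (g Y) = Some (g (X \<union> Y))" using assms unfolding ea_mor_fin_def by auto
  then show "mt (g X) (g Y) = bt" "g (X \<union> Y) = jn (g X) (g Y)"
    using pl_eq[of "g X" "g Y"] mor_in[OF assms(1)] assms(2,3) by (auto split: if_splits)
qed

lemma mor_empty: "mor n g \<Longrightarrow> g {} = bt"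
  using mor_disjoint(1)[of n g "{}" "{}"] mor_in[of n g "{}"] by simp

lemma mor_split: "mor n g \<Longrightarrow> X \<subseteq> {1..n} \<Longrightarrow> g X = jn (g (X - Y)) (g (X \<inter> Y))"
  using mor_disjoint(2)[of n g "X - Y" "X \<inter> Y"] by (auto simp: Un_Diff_Int)

lemma mor_Int:
  assumes m: "mor n g" and X: "X \<subseteq> {1..n}" and Y: "Y \<subseteq> {1..n}"
  shows "g (X \<inter> Y) = mt (g X) (g Y)"
proof -
  have "g X = jn (g (X - Y)) (g (X \<inter> Y))" "g Y = jn (g (Y - X)) (g (X \<inter> Y))"
    using mor_split[OF m X, of Y] mor_split[OF m Y, of X] by (simp_all add: Int_commute)
  moreover have "mt (g (X - Y)) (g (Y - X)) = bt" "mt (g (X - Y)) (g (X \<inter> Y)) = bt"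
    "mt (g (Y - X)) (g (X \<inter> Y)) = bt"
    using X Y by (auto intro!: mor_disjoint(1)[OF m])
  moreover have "g (X - Y) \<in> A" "g (Y - X) \<in> A" "g (X \<inter> Y) \<in> A"
    using X Y by (auto intro!: mor_in[OF m])
  ultimately show ?thesis by (simp add: mt_jn_common_disjoint)
qed

lemma mor_Un:
  assumes m: "mor n g" and X: "X \<subseteq> {1..n}" and Y: "Y \<subseteq> {1..n}"
  shows "g (X \<union> Y) = jn (g X) (g Y)"
proof -
  have in_A: "g (X - Y) \<in> A" "g (X \<inter> Y) \<in> A" "g Y \<in> A"
    using X Y by (auto intro!: mor_in[OF m])
  have "g ((X - Y) \<union> Y) = jn (g (X - Y)) (g Y)"
    using X Y by (intro mor_disjoint(2)[OF m]) auto
  then have "g (X \<union> Y) = jn (g (X - Y)) (g Y)" by simp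
  also have "g Y = jn (g (X \<inter> Y)) (g Y)"
    using mor_Int[OF m X Y] in_A X Y by (metis jn_commute jn_mt_absorb mor_in[OF m] mt_commute)
  finally show ?thesis
    using mor_split[OF m X, of Y] in_A by (simp add: jn_assoc)
qed

lemma mor_intro:
  assumes "\<And>X. X \<subseteq> {1..n} \<Longrightarrow> g X \<in> A" "g {1..n} = tp"
    and "\<And>X Y. X \<subseteq> {1..n} \<Longrightarrow> Y \<subseteq> {1..n} \<Longrightarrow> X \<inter> Y = {} \<Longrightarrow>
      mt (g X) (g Y) = bt \<and> g (X \<union> Y) = jn (g X) (g Y)"
  shows "mor n g"
  unfolding ea_mor_fin_def using assms pl_eq by auto

lemma join_upto_atoms:
  "mor n h \<Longrightarrow> m \<le> n \<Longrightarrow> join_upto (\<lambda>j. if j \<in> T then h {j} else bt) m = h (T \<inter> {1..m})"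
proof (induction m)
  case 0
  then show ?case by (simp add: mor_empty)
next
  case (Suc m)
  show ?case
  proof (cases "Suc m \<in> T")
    case True
    then have "T \<inter> {1..Suc m} = (T \<inter> {1..m}) \<union> {Suc m}" by (auto simp: le_Suc_eq)
    moreover have "h ((T \<inter> {1..m}) \<union> {Suc m}) = jn (h (T \<inter> {1..m})) (h {Suc m})"
      using Suc.prems by (intro mor_disjoint(2)) auto
    ultimately show ?thesis using Suc True by simp
  next
    case False
    then have "T \<inter> {1..Suc m} = T \<inter> {1..m}" by (auto simp: le_Suc_eq)
    moreover have "h (T \<inter> {1..m}) \<in> A" using Suc.prems by (intro mor_in) auto
    ultimately show ?thesis using Suc False by simp
  qed
qed

end

lemma bool_mor_fin_bij_image:
  assumes bij: "bij_betw en B {1..k}"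
    and into: "\<And>X. X \<subseteq> {1..n} \<Longrightarrow> R X \<subseteq> B" and "R {} = {}" and "R {1..n} = B"
    and hom: "\<And>X Y. X \<subseteq> {1..n} \<Longrightarrow> Y \<subseteq> {1..n} \<Longrightarrow>
      R (X \<inter> Y) = R X \<inter> R Y \<and> R (X \<union> Y) = R X \<union> R Y"
    and compl: "\<And>X. X \<subseteq> {1..n} \<Longrightarrow> R ({1..n} - X) = B - R X"
  shows "bool_mor_fin n k (\<lambda>X. en ` R X)"
proof -
  have inj: "inj_on en B" and img: "en ` B = {1..k}"
    using bij by (auto simp: bij_betw_def)
  show ?thesis
    unfolding bool_mor_fin_def
  proof (intro conjI allI impI)
    fix X assume X: "X \<subseteq> {1..n}"
    show "en ` R X \<subseteq> {1..k}" using into[OF X] img by auto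
    show "en ` R ({1..n} - X) = {1..k} - en ` R X"
      using compl[OF X] into[OF X] inj img by (simp add: inj_on_image_set_diff)
  next
    fix X Y assume "X \<subseteq> {1..n} \<and> Y \<subseteq> {1..n}"
    then show "en ` R (X \<inter> Y) = en ` R X \<inter> en ` R Y" "en ` R (X \<union> Y) = en ` R X \<union> en ` R Y"
      using hom[of X Y] into[of X] into[of Y] inj by (auto simp: inj_on_image_Int)
  qed (use assms img in auto)
qed

definition slice :: "(nat \<times> nat \<Rightarrow> nat) \<Rightarrow> nat \<Rightarrow> nat set \<Rightarrow> nat \<Rightarrow> nat set" where
  "slice en n1 S j = {i \<in> {1..n1}. en (i, j) \<in> S}"

context bool_ea
begin

lemma join_upto_singletons:
  assumes "mor n h"
  shows "join_upto (\<lambda>j. h {j}) n = tp"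
proof -
  have "join_upto (\<lambda>j. h {j}) n = join_upto (\<lambda>j. if j \<in> {1..n} then h {j} else bt) n"
    by (rule join_upto_cong) simp
  also have "\<dots> = h ({1..n} \<inter> {1..n})" by (rule join_upto_atoms[OF assms]) simp
  finally show ?thesis using mor_top[OF assms] by simp
qed

(* The block of the pair (i, j) is g1 {i} \<and> g2 {j}; a set S of pairs, encoded by en, is sent to the
   join of its blocks, grouped by the second coordinate. *)
definition prod_mor ::
  "(nat \<times> nat \<Rightarrow> nat) \<Rightarrow> nat \<Rightarrow> nat \<Rightarrow> (nat set \<Rightarrow> 'a) \<Rightarrow> (nat set \<Rightarrow> 'a) \<Rightarrow> nat set \<Rightarrow> 'a" where
  "prod_mor en n1 n2 g1 g2 S = join_upto (\<lambda>j. mt (g1 (slice en n1 S j)) (g2 {j})) n2"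

context
  fixes n1 n2 k :: nat and g1 g2 :: "nat set \<Rightarrow> 'a" and en :: "nat \<times> nat \<Rightarrow> nat"
  assumes m1: "mor n1 g1" and m2: "mor n2 g2"
    and en: "bij_betw en ({1..n1} \<times> {1..n2}) {1..k}"
begin

lemma slice_image:
  assumes "R \<subseteq> {1..n1} \<times> {1..n2}" "j \<in> {1..n2}"
  shows "slice en n1 (en ` R) j = {i. (i, j) \<in> R}"
proof -
  have "en (i, j) \<in> en ` R \<longleftrightarrow> (i, j) \<in> R" if "i \<in> {1..n1}" for i
    using assms that by (intro inj_on_image_mem_iff[OF bij_betw_imp_inj_on[OF en]]) auto
  then show ?thesis using assms unfolding slice_def by auto
qed

lemma slice_subset: "slice en n1 S j \<subseteq> {1..n1}"
  by (auto simp: slice_def)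

lemma g1_slice_in: "g1 (slice en n1 S j) \<in> A"
  by (rule mor_in[OF m1 slice_subset])

lemma g2_atom_in: "j \<in> {1..n2} \<Longrightarrow> g2 {j} \<in> A"
  by (rule mor_in[OF m2]) auto

lemma prod_mor_in: "prod_mor en n1 n2 g1 g2 S \<in> A"
  unfolding prod_mor_def by (intro join_upto_in mt_in g1_slice_in g2_atom_in)

lemma prod_mor_top: "prod_mor en n1 n2 g1 g2 {1..k} = tp"
proof -
  have "mt (g1 (slice en n1 {1..k} j)) (g2 {j}) = g2 {j}" if j: "j \<in> {1..n2}" for j
  proof -
    have "slice en n1 {1..k} j = {1..n1}"
      using j bij_betw_apply[OF en] unfolding slice_def by auto
    then show ?thesis using mor_top[OF m1] g2_atom_in[OF j] by simp
  qed
  then have "prod_mor en n1 n2 g1 g2 {1..k} = join_upto (\<lambda>j. g2 {j}) n2"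
    unfolding prod_mor_def by (rule join_upto_cong)
  then show ?thesis by (simp add: join_upto_singletons[OF m2])
qed

lemma prod_mor_Un:
  "prod_mor en n1 n2 g1 g2 (S \<union> T) = jn (prod_mor en n1 n2 g1 g2 S) (prod_mor en n1 n2 g1 g2 T)"
proof -
  have "slice en n1 (S \<union> T) j = slice en n1 S j \<union> slice en n1 T j" for j
    by (auto simp: slice_def)
  then have "prod_mor en n1 n2 g1 g2 (S \<union> T) = join_upto (\<lambda>j.
      jn (mt (g1 (slice en n1 S j)) (g2 {j})) (mt (g1 (slice en n1 T j)) (g2 {j}))) n2"
    unfolding prod_mor_def
    by (intro join_upto_cong)
      (simp add: mor_Un[OF m1 slice_subset slice_subset] g1_slice_in g2_atom_in jn_mt_distrib)
  also have "\<dots> = jn (prod_mor en n1 n2 g1 g2 S) (prod_mor en n1 n2 g1 g2 T)"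
    unfolding prod_mor_def by (rule join_upto_jn) (simp_all add: g1_slice_in g2_atom_in)
  finally show ?thesis .
qed

lemma prod_mor_disjoint:
  assumes ST: "S \<inter> T = {}"
  shows "mt (prod_mor en n1 n2 g1 g2 S) (prod_mor en n1 n2 g1 g2 T) = bt"
  unfolding prod_mor_def
proof (rule join_upto_disjoint)
  fix j l assume j: "j \<in> {1..n2}" and l: "l \<in> {1..n2}"
  have "mt (g1 (slice en n1 S j)) (g1 (slice en n1 T l)) = bt \<or> mt (g2 {j}) (g2 {l}) = bt"
  proof (cases "j = l")
    case True
    then have "slice en n1 S j \<inter> slice en n1 T l = {}" using ST by (auto simp: slice_def)
    then show ?thesis using mor_Int[OF m1 slice_subset slice_subset] mor_empty[OF m1] by metis
  next
    case False
    then show ?thesis using mor_Int[OF m2, of "{j}" "{l}"] mor_empty[OF m2] j l by auto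
  qed
  moreover have "mt (mt (g1 (slice en n1 S j)) (g2 {j})) (mt (g1 (slice en n1 T l)) (g2 {l})) =
      mt (mt (g1 (slice en n1 S j)) (g1 (slice en n1 T l))) (mt (g2 {j}) (g2 {l}))"
    using g1_slice_in g2_atom_in j l by (simp add: mt_mt_swap)
  ultimately show "mt (mt (g1 (slice en n1 S j)) (g2 {j})) (mt (g1 (slice en n1 T l)) (g2 {l})) = bt"
    using g1_slice_in g2_atom_in j l by (metis bt_mt mt_bt mt_in)
qed (use g1_slice_in g2_atom_in in auto)

lemma prod_mor_is_mor: "mor k (prod_mor en n1 n2 g1 g2)"
  by (rule mor_intro)
    (use prod_mor_top in \<open>simp_all add: prod_mor_in prod_mor_Un prod_mor_disjoint\<close>)

lemma prod_mor_arrow_left: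
  "intR_arrow n1 g1 k (prod_mor en n1 n2 g1 g2) (\<lambda>X. en ` (X \<times> {1..n2}))"
  unfolding intR_arrow_def
proof (intro conjI allI impI)
  show "bool_mor_fin n1 k (\<lambda>X. en ` (X \<times> {1..n2}))"
    by (rule bool_mor_fin_bij_image[OF en]) blast+
  fix X assume X: "X \<subseteq> {1..n1}"
  then have "X \<times> {1..n2} \<subseteq> {1..n1} \<times> {1..n2}" by blast
  then have "prod_mor en n1 n2 g1 g2 (en ` (X \<times> {1..n2})) = join_upto (\<lambda>j. mt (g1 X) (g2 {j})) n2"
    unfolding prod_mor_def by (intro join_upto_cong) (simp add: slice_image)
  also have "\<dots> = mt (g1 X) (join_upto (\<lambda>j. g2 {j}) n2)"
    by (rule join_upto_mt) (use mor_in[OF m1 X] g2_atom_in in auto)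
  finally show "prod_mor en n1 n2 g1 g2 (en ` (X \<times> {1..n2})) = g1 X"
    using join_upto_singletons[OF m2] mor_in[OF m1 X] by simp
qed

lemma prod_mor_arrow_right:
  "intR_arrow n2 g2 k (prod_mor en n1 n2 g1 g2) (\<lambda>Y. en ` ({1..n1} \<times> Y))"
  unfolding intR_arrow_def
proof (intro conjI allI impI)
  show "bool_mor_fin n2 k (\<lambda>Y. en ` ({1..n1} \<times> Y))"
    by (rule bool_mor_fin_bij_image[OF en]) blast+
  fix Y assume Y: "Y \<subseteq> {1..n2}"
  have "prod_mor en n1 n2 g1 g2 (en ` ({1..n1} \<times> Y)) =
      join_upto (\<lambda>j. if j \<in> Y then g2 {j} else bt) n2"
    unfolding prod_mor_def
  proof (rule join_upto_cong)
    fix j assume j: "j \<in> {1..n2}"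
    moreover have "{1..n1} \<times> Y \<subseteq> {1..n1} \<times> {1..n2}" using Y by blast
    ultimately have "slice en n1 (en ` ({1..n1} \<times> Y)) j = (if j \<in> Y then {1..n1} else {})"
      by (auto simp: slice_image)
    then show "mt (g1 (slice en n1 (en ` ({1..n1} \<times> Y)) j)) (g2 {j}) = (if j \<in> Y then g2 {j} else bt)"
      using mor_top[OF m1] mor_empty[OF m1] g2_atom_in[OF j] by simp
  qed
  then show "prod_mor en n1 n2 g1 g2 (en ` ({1..n1} \<times> Y)) = g2 Y"
    using join_upto_atoms[OF m2, of n2 Y] Y by (simp add: Int_absorb2)
qed

end

lemma cospan:
  assumes "mor n1 g1" "mor n2 g2"
  shows "\<exists>n g f1 f2. mor n g \<and> intR_arrow n1 g1 n g f1 \<and> intR_arrow n2 g2 n g f2"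
proof -
  obtain en where en: "bij_betw en ({1..n1} \<times> {1..n2}) {1..card ({1..n1} \<times> {1..n2})}"
    using finite_same_card_bij[of "{1..n1} \<times> {1..n2}" "{1..card ({1..n1} \<times> {1..n2})}"] by auto
  show ?thesis
    using prod_mor_is_mor[OF assms en] prod_mor_arrow_left[OF assms en]
      prod_mor_arrow_right[OF assms en] by blast
qed

definition support :: "nat \<Rightarrow> (nat set \<Rightarrow> 'a) \<Rightarrow> nat set" where
  "support m h = {j \<in> {1..m}. h {j} \<noteq> bt}"

lemma mor_null_atoms:
  assumes m: "mor n h" and T: "T \<subseteq> {1..n}" and null: "\<And>j. j \<in> T \<Longrightarrow> h {j} = bt"
  shows "h T = bt"
proof -
  have "finite T" using T finite_subset by blast
  then show ?thesis using T null
  proof (induction T rule: finite_induct)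
    case (insert a F)
    then have "h ({a} \<union> F) = jn (h {a}) (h F)" by (intro mor_disjoint(2)[OF m]) auto
    then show ?case using insert by simp
  qed (simp add: mor_empty[OF m])
qed

lemma mor_restrict_support:
  assumes m: "mor m h" and S: "S \<subseteq> {1..m}"
  shows "h S = h (S \<inter> support m h)"
proof -
  have "h ((S \<inter> support m h) \<union> (S - support m h)) = jn (h (S \<inter> support m h)) (h (S - support m h))"
    using S by (intro mor_Un[OF m]) auto
  moreover have "h (S - support m h) = bt"
    by (rule mor_null_atoms[OF m]) (use S in \<open>auto simp: support_def\<close>)
  moreover have "h (S \<inter> support m h) \<in> A" using S by (intro mor_in[OF m]) auto
  ultimately show ?thesis by (simp add: Int_Diff_Un)
qed

lemma support_separates:
  assumes m: "mor m h" and S: "S \<subseteq> {1..m}" and T: "T \<subseteq> {1..m}" and eq: "h S = h T"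
    and j: "j \<in> support m h"
  shows "j \<in> S \<longleftrightarrow> j \<in> T"
proof -
  have jm: "{j} \<subseteq> {1..m}" using j by (auto simp: support_def)
  have "h ({j} \<inter> S) = h ({j} \<inter> T)" using mor_Int[OF m jm S] mor_Int[OF m jm T] eq by simp
  moreover have "h ({j} \<inter> X) = (if j \<in> X then h {j} else bt)" for X
    using mor_empty[OF m] by auto
  moreover have "h {j} \<noteq> bt" using j by (simp add: support_def)
  ultimately show ?thesis by (auto split: if_splits)
qed

lemma coequalizer:
  assumes mh: "mor m h" and a1: "intR_arrow n g m h f1" and a2: "intR_arrow n g m h f2"
  shows "\<exists>k l q. mor k l \<and> intR_arrow m h k l q \<and> (\<forall>X. X \<subseteq> {1..n} \<longrightarrow> q (f1 X) = q (f2 X))"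
proof (cases "support m h = {}")
  case True
  then have null: "h S = bt" if "S \<subseteq> {1..m}" for S
    using mor_restrict_support[OF mh that] mor_empty[OF mh] by simp
  (* then A is the one-element algebra, and everything factors through 2^[0] *)
  then have "tp = bt" using mor_top[OF mh] by force
  then have "mor 0 (\<lambda>_. bt)" by (intro mor_intro) auto
  moreover have "intR_arrow m h 0 (\<lambda>_. bt) (\<lambda>_. {})"
    unfolding intR_arrow_def bool_mor_fin_def using null by auto
  ultimately show ?thesis by blast
next
  case False
  then obtain j0 where j0: "j0 \<in> support m h" by blast
  (* q is the preimage map of the retraction of {1..m} onto the support sending null atoms to j0 *)
  define r where "r j = (if j \<in> support m h then j else j0)" for j
  define q where "q S = {j \<in> {1..m}. r j \<in> S}" for S
  have r_in: "r j \<in> support m h" for j using j0 by (simp add: r_def)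
  have q_arrow: "intR_arrow m h m h q"
    unfolding intR_arrow_def
  proof (intro conjI allI impI)
    show "bool_mor_fin m m q"
      using r_in unfolding bool_mor_fin_def q_def support_def by blast
    fix X assume X: "X \<subseteq> {1..m}"
    have "q X \<inter> support m h = X \<inter> support m h" using X by (auto simp: q_def r_def support_def)
    moreover have "q X \<subseteq> {1..m}" by (auto simp: q_def)
    ultimately show "h (q X) = h X"
      using mor_restrict_support[OF mh X] mor_restrict_support[OF mh, of "q X"] by simp
  qed
  have "q (f1 X) = q (f2 X)" if "X \<subseteq> {1..n}" for X
  proof -
    have "f1 X \<subseteq> {1..m}" "f2 X \<subseteq> {1..m}" "h (f1 X) = h (f2 X)"
      using a1 a2 that by (auto simp: intR_arrow_def bool_mor_fin_def)
    then have "r j \<in> f1 X \<longleftrightarrow> r j \<in> f2 X" for j by (rule support_separates[OF mh _ _ _ r_in])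
    then show ?thesis by (simp add: q_def)
  qed
  then show ?thesis using mh q_arrow by blast
qed

lemma mor_one_block: "mor 1 (\<lambda>S. if 1 \<in> S then tp else bt)"
  by (rule mor_intro) auto

end

lemma boolean_imp_filtered:
  assumes "is_boolean_EA A pl z u"
  shows "intR_filtered A pl u"
proof -
  obtain mt jn cp where "boolean_algebra_on A mt jn cp z u"
    and "\<forall>x\<in>A. \<forall>y\<in>A. pl x y = (if mt x y = z then Some (jn x y) else None)"
    using assms unfolding is_boolean_EA_def by blast
  then interpret bool_ea A mt jn cp z u pl
    by unfold_locales auto
  show ?thesis
    unfolding intR_filtered_def
  proof (intro conjI allI impI)
    show "\<exists>n g. ea_mor_fin A pl u n g" using mor_one_block by blast
  next
    fix n1 g1 n2 g2 assume "ea_mor_fin A pl u n1 g1 \<and> ea_mor_fin A pl u n2 g2"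
    then show "\<exists>n g f1 f2. ea_mor_fin A pl u n g \<and> intR_arrow n1 g1 n g f1 \<and> intR_arrow n2 g2 n g f2"
      using cospan by blast
  next
    fix n g m h f1 f2
    assume "ea_mor_fin A pl u n g \<and> ea_mor_fin A pl u m h \<and> intR_arrow n g m h f1 \<and> intR_arrow n g m h f2"
    then show "\<exists>k l q. ea_mor_fin A pl u k l \<and> intR_arrow m h k l q \<and>
        (\<forall>X. X \<subseteq> {1..n} \<longrightarrow> q (f1 X) = q (f2 X))"
      using coequalizer by blast
  qed
qed

lemma subset_two_cases: "X \<subseteq> {1..2::nat} \<Longrightarrow> X = {} \<or> X = {1} \<or> X = {2} \<or> X = {1, 2}"
proof -
  assume X: "X \<subseteq> {1..2::nat}"
  then have "x \<in> X \<Longrightarrow> x = 1 \<or> x = 2" for x by auto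
  then show ?thesis by (cases "1 \<in> X"; cases "2 \<in> X") auto
qed

lemma bool_mor_fin_comp: "bool_mor_fin n m f \<Longrightarrow> bool_mor_fin m k q \<Longrightarrow> bool_mor_fin n k (q \<circ> f)"
  unfolding bool_mor_fin_def by auto

lemma intR_arrow_comp:
  "intR_arrow n g m h f \<Longrightarrow> intR_arrow m h k l q \<Longrightarrow> intR_arrow n g k l (q \<circ> f)"
  unfolding intR_arrow_def using bool_mor_fin_comp unfolding bool_mor_fin_def by auto

lemma intR_arrow_subset: "intR_arrow n g m h f \<Longrightarrow> X \<subseteq> {1..n} \<Longrightarrow> f X \<subseteq> {1..m}"
  unfolding intR_arrow_def bool_mor_fin_def by auto

lemma intR_arrow_apply: "intR_arrow n g m h f \<Longrightarrow> X \<subseteq> {1..n} \<Longrightarrow> h (f X) = g X"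
  unfolding intR_arrow_def by auto

locale eff_alg =
  fixes A :: "'a set" and pl :: "'a \<Rightarrow> 'a \<Rightarrow> 'a option" and z u :: 'a
  assumes effect_algebra: "effect_algebra A pl z u"
begin

lemma zero_in[simp]: "z \<in> A" and one_in[simp]: "u \<in> A"
  using effect_algebra unfolding effect_algebra_def by simp_all

lemma pl_closed: "a \<in> A \<Longrightarrow> b \<in> A \<Longrightarrow> pl a b = Some c \<Longrightarrow> c \<in> A"
  using effect_algebra unfolding effect_algebra_def by blast

lemma pl_commute: "a \<in> A \<Longrightarrow> b \<in> A \<Longrightarrow> pl a b = Some c \<Longrightarrow> pl b a = Some c"
  using effect_algebra unfolding effect_algebra_def by blast

lemma pl_assoc:
  "a \<in> A \<Longrightarrow> b \<in> A \<Longrightarrow> c \<in> A \<Longrightarrow> pl a b = Some d \<Longrightarrow> pl d c = Some e \<Longrightarrow>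
    \<exists>f. pl b c = Some f \<and> pl a f = Some e"
  using effect_algebra unfolding effect_algebra_def by blast

lemma ex1_ortho: "a \<in> A \<Longrightarrow> \<exists>!b. b \<in> A \<and> pl a b = Some u"
  using effect_algebra unfolding effect_algebra_def by (elim conjE) (rule bspec)

lemma pl_one_defined: "a \<in> A \<Longrightarrow> pl a u \<noteq> None \<Longrightarrow> a = z"
  using effect_algebra unfolding effect_algebra_def by blast

definition ortho :: "'a \<Rightarrow> 'a" where
  "ortho a = (THE b. b \<in> A \<and> pl a b = Some u)"

lemma ortho_in[simp]: "a \<in> A \<Longrightarrow> ortho a \<in> A"
  and pl_ortho: "a \<in> A \<Longrightarrow> pl a (ortho a) = Some u"
  using theI'[OF ex1_ortho] unfolding ortho_def by auto

lemma ortho_unique: "a \<in> A \<Longrightarrow> b \<in> A \<Longrightarrow> pl a b = Some u \<Longrightarrow> b = ortho a"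
  by (metis ex1_ortho ortho_in pl_ortho)

lemma pl_ortho_left: "a \<in> A \<Longrightarrow> pl (ortho a) a = Some u"
  using pl_commute[of a "ortho a" u] pl_ortho by simp

lemma pl_one_zero: "pl u z = Some u"
proof -
  have "ortho u = z" using pl_one_defined[of "ortho u"] pl_ortho_left[of u] by simp
  then show ?thesis using pl_ortho[of u] by simp
qed

lemma pl_zero_right:
  assumes a: "a \<in> A"
  shows "pl a z = Some a"
proof -
  (* (a' + a) + 0 = 1 re-associates to a' + (a + 0) = 1, so a + 0 is the orthosupplement of a' *)
  obtain f where f: "pl a z = Some f" "pl (ortho a) f = Some u"
    using pl_assoc[OF ortho_in[OF a] a zero_in pl_ortho_left[OF a] pl_one_zero] by blast
  have "f = ortho (ortho a)" using ortho_unique[OF ortho_in[OF a] _ f(2)] pl_closed[OF a zero_in f(1)] .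
  moreover have "a = ortho (ortho a)" using ortho_unique[OF ortho_in[OF a] a pl_ortho_left[OF a]] .
  ultimately show ?thesis using f(1) by simp
qed

lemma pl_zero_left: "a \<in> A \<Longrightarrow> pl z a = Some a"
  using pl_commute[of a z a] pl_zero_right by simp

abbreviation mor where "mor n g \<equiv> ea_mor_fin A pl u n g"

lemma mor_in: "mor n g \<Longrightarrow> X \<subseteq> {1..n} \<Longrightarrow> g X \<in> A"
  unfolding ea_mor_fin_def by auto

lemma mor_top: "mor n g \<Longrightarrow> g {1..n} = u"
  unfolding ea_mor_fin_def by auto

lemma mor_pl:
  "mor n g \<Longrightarrow> X \<subseteq> {1..n} \<Longrightarrow> Y \<subseteq> {1..n} \<Longrightarrow> X \<inter> Y = {} \<Longrightarrow> pl (g X) (g Y) = Some (g (X \<union> Y))"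
  unfolding ea_mor_fin_def by auto

lemma mor_intro:
  assumes "\<And>X. X \<subseteq> {1..n} \<Longrightarrow> g X \<in> A" "g {1..n} = u"
    and "\<And>X Y. X \<subseteq> {1..n} \<Longrightarrow> Y \<subseteq> {1..n} \<Longrightarrow> X \<inter> Y = {} \<Longrightarrow> pl (g X) (g Y) = Some (g (X \<union> Y))"
  shows "mor n g"
  unfolding ea_mor_fin_def using assms by auto

lemma mor_empty:
  assumes m: "mor n g"
  shows "g {} = z"
  using mor_pl[OF m, of "{}" "{1..n}"] pl_one_defined[of "g {}"] mor_in[OF m, of "{}"] mor_top[OF m]
  by auto

lemma mor_compl:
  assumes m: "mor n g" and X: "X \<subseteq> {1..n}"
  shows "g ({1..n} - X) = ortho (g X)"
proof -
  have "pl (g X) (g ({1..n} - X)) = Some (g (X \<union> ({1..n} - X)))" by (rule mor_pl[OF m X]) auto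
  then have "pl (g X) (g ({1..n} - X)) = Some u" using X mor_top[OF m] by (simp add: Un_absorb1)
  then show ?thesis using ortho_unique mor_in[OF m] X by blast
qed

definition ortho_pair :: "'a \<Rightarrow> nat set \<Rightarrow> 'a" where
  "ortho_pair a S = (if 1 \<in> S then (if 2 \<in> S then u else a) else (if 2 \<in> S then ortho a else z))"

lemma mor_ortho_pair:
  assumes a: "a \<in> A"
  shows "mor 2 (ortho_pair a)"
proof (rule mor_intro)
  show "ortho_pair a X \<in> A" for X unfolding ortho_pair_def using a by auto
  show "ortho_pair a {1..2} = u" unfolding ortho_pair_def by simp
  fix X Y :: "nat set" assume X: "X \<subseteq> {1..2}" and Y: "Y \<subseteq> {1..2}" and XY: "X \<inter> Y = {}"
  show "pl (ortho_pair a X) (ortho_pair a Y) = Some (ortho_pair a (X \<union> Y))"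
    using subset_two_cases[OF X] subset_two_cases[OF Y] XY unfolding ortho_pair_def
    by (elim disjE) (auto simp: a pl_ortho pl_ortho_left pl_zero_left pl_zero_right pl_one_zero)
qed

(* The partition of 1 into x, y and e' where x + y = e; the value at a set is the sum of its
   blocks, e.g. x + e' = y' because y + (x + e') = 1. *)
definition ortho_triple :: "'a \<Rightarrow> 'a \<Rightarrow> 'a \<Rightarrow> nat set \<Rightarrow> 'a" where
  "ortho_triple x y e S =
    (if 1 \<in> S then (if 2 \<in> S then (if 3 \<in> S then u else e) else (if 3 \<in> S then ortho y else x))
     else (if 2 \<in> S then (if 3 \<in> S then ortho x else y) else (if 3 \<in> S then ortho e else z)))"

lemma pl_ortho_of_sum:
  assumes x: "x \<in> A" and y: "y \<in> A" and e: "pl x y = Some e"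
  shows "pl y (ortho e) = Some (ortho x)"
proof -
  have "e \<in> A" using pl_closed[OF x y e] .
  then obtain f where f: "pl y (ortho e) = Some f" "pl x f = Some u"
    using pl_assoc[OF x y ortho_in[OF \<open>e \<in> A\<close>] e pl_ortho[OF \<open>e \<in> A\<close>]] by blast
  then show ?thesis using ortho_unique[OF x _ f(2)] pl_closed[OF y _ f(1)] \<open>e \<in> A\<close> by simp
qed

lemma mor_ortho_triple:
  assumes x: "x \<in> A" and y: "y \<in> A" and e: "pl x y = Some e"
  shows "mor 3 (ortho_triple x y e)"
proof -
  have eA: "e \<in> A" using pl_closed[OF x y e] .
  have ye: "pl y x = Some e" using pl_commute[OF x y e] .
  have sums: "pl x y = Some e" "pl y x = Some e"
    "pl x (ortho e) = Some (ortho y)" "pl (ortho e) x = Some (ortho y)"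
    "pl y (ortho e) = Some (ortho x)" "pl (ortho e) y = Some (ortho x)"
    "pl e (ortho e) = Some u" "pl (ortho e) e = Some u"
    "pl x (ortho x) = Some u" "pl (ortho x) x = Some u"
    "pl y (ortho y) = Some u" "pl (ortho y) y = Some u"
    using e ye pl_ortho_of_sum[OF x y e] pl_ortho_of_sum[OF y x ye]
      pl_commute[OF x ortho_in[OF eA] pl_ortho_of_sum[OF y x ye]]
      pl_commute[OF y ortho_in[OF eA] pl_ortho_of_sum[OF x y e]]
    by (simp_all add: x y eA pl_ortho pl_ortho_left)
  show ?thesis
  proof (rule mor_intro)
    show "ortho_triple x y e X \<in> A" for X unfolding ortho_triple_def using x y eA by auto
    show "ortho_triple x y e {1..3} = u" unfolding ortho_triple_def by simp
    fix X Y :: "nat set" assume "X \<inter> Y = {}"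
    then have "\<not> (k \<in> X \<and> k \<in> Y)" for k by blast
    then show "pl (ortho_triple x y e X) (ortho_triple x y e Y) = Some (ortho_triple x y e (X \<union> Y))"
      unfolding ortho_triple_def Un_iff
      by (cases "1 \<in> X"; cases "2 \<in> X"; cases "3 \<in> X"; cases "1 \<in> Y"; cases "2 \<in> Y"; cases "3 \<in> Y")
        (simp_all add: sums x y eA pl_zero_left pl_zero_right pl_one_zero)
  qed
qed

end

definition split_hom :: "nat \<Rightarrow> nat set \<Rightarrow> nat set \<Rightarrow> nat set" where
  "split_hom n S X = (if 1 \<in> X then S else {}) \<union> (if 2 \<in> X then {1..n} - S else {})"

lemma bool_mor_fin_split_hom:
  assumes S: "S \<subseteq> {1..n}"
  shows "bool_mor_fin 2 n (split_hom n S)"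
  unfolding bool_mor_fin_def
proof (intro conjI allI impI)
  fix X :: "nat set" assume X: "X \<subseteq> {1..2}"
  show "split_hom n S X \<subseteq> {1..n}" using S by (auto simp: split_hom_def)
  show "split_hom n S ({1..2} - X) = {1..n} - split_hom n S X"
    using subset_two_cases[OF X] S unfolding split_hom_def by (elim disjE) auto
next
  fix X Y :: "nat set" assume "X \<subseteq> {1..2} \<and> Y \<subseteq> {1..2}"
  then have X: "X \<subseteq> {1..2}" and Y: "Y \<subseteq> {1..2}" by auto
  show "split_hom n S (X \<inter> Y) = split_hom n S X \<inter> split_hom n S Y"
    using subset_two_cases[OF X] subset_two_cases[OF Y] S unfolding split_hom_def by (elim disjE) auto
  show "split_hom n S (X \<union> Y) = split_hom n S X \<union> split_hom n S Y"
    using subset_two_cases[OF X] subset_two_cases[OF Y] S unfolding split_hom_def by (elim disjE) auto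
qed (use S in \<open>auto simp: split_hom_def\<close>)

locale filtered_ea = eff_alg +
  assumes filtered: "intR_filtered A pl u"
begin

lemma cospan_exists:
  "mor n1 g1 \<Longrightarrow> mor n2 g2 \<Longrightarrow> \<exists>n g f1 f2. mor n g \<and> intR_arrow n1 g1 n g f1 \<and> intR_arrow n2 g2 n g f2"
  using filtered unfolding intR_filtered_def by blast

lemma coequalizer_exists:
  "mor n g \<Longrightarrow> mor m h \<Longrightarrow> intR_arrow n g m h f1 \<Longrightarrow> intR_arrow n g m h f2 \<Longrightarrow>
    \<exists>k l q. mor k l \<and> intR_arrow m h k l q \<and> (\<forall>X. X \<subseteq> {1..n} \<longrightarrow> q (f1 X) = q (f2 X))"
  using filtered unfolding intR_filtered_def by blast

lemma split_hom_arrow: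
  assumes m: "mor n h" and S: "S \<subseteq> {1..n}" and a: "h S = a"
  shows "intR_arrow 2 (ortho_pair a) n h (split_hom n S)"
  unfolding intR_arrow_def
proof (intro conjI allI impI)
  show "bool_mor_fin 2 n (split_hom n S)" by (rule bool_mor_fin_split_hom[OF S])
  fix X :: "nat set" assume X: "X \<subseteq> {1..2}"
  have "h ({1..n} - S) = ortho a" using mor_compl[OF m S] a by simp
  moreover have "h (S \<union> ({1..n} - S)) = u" using S mor_top[OF m] by (simp add: Un_absorb1)
  ultimately show "h (split_hom n S X) = ortho_pair a X"
    using subset_two_cases[OF X] a mor_empty[OF m]
    unfolding split_hom_def ortho_pair_def by (elim disjE) simp_all
qed

(* S and T are the images of {1} under two parallel arrows out of the object (a, a') *)
lemma coequalize_equal_values: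
  assumes m: "mor n h" and S: "S \<subseteq> {1..n}" and T: "T \<subseteq> {1..n}" and eq: "h S = h T"
  shows "\<exists>k l q. mor k l \<and> intR_arrow n h k l q \<and> q S = q T"
proof -
  obtain k l q where "mor k l" "intR_arrow n h k l q"
    and "\<forall>X. X \<subseteq> {1..2} \<longrightarrow> q (split_hom n S X) = q (split_hom n T X)"
    using coequalizer_exists[OF mor_ortho_pair[OF mor_in[OF m S]] m
        split_hom_arrow[OF m S refl] split_hom_arrow[OF m T eq[symmetric]]] by blast
  moreover have "split_hom n S {1} = S" "split_hom n T {1} = T" by (simp_all add: split_hom_def)
  ultimately show ?thesis by (metis empty_subsetI insert_subset atLeastAtMost_iff one_le_numeral order_refl)
qed

lemma merge_representations:
  assumes m: "mor k g" and m': "mor k' g'" and X1: "X1 \<subseteq> {1..k}" and X2: "X2 \<subseteq> {1..k}"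
    and Y1: "Y1 \<subseteq> {1..k'}" and Y2: "Y2 \<subseteq> {1..k'}" and eq1: "g X1 = g' Y1" and eq2: "g X2 = g' Y2"
  shows "\<exists>K G f f'. mor K G \<and> intR_arrow k g K G f \<and> intR_arrow k' g' K G f' \<and>
    f X1 = f' Y1 \<and> f X2 = f' Y2"
proof -
  obtain N h a1 a2 where c: "mor N h" "intR_arrow k g N h a1" "intR_arrow k' g' N h a2"
    using cospan_exists[OF m m'] by blast
  have "h (a1 X1) = h (a2 Y1)" using intR_arrow_apply[OF c(2) X1] intR_arrow_apply[OF c(3) Y1] eq1 by simp
  then obtain N1 h1 q1 where q1: "mor N1 h1" "intR_arrow N h N1 h1 q1" "q1 (a1 X1) = q1 (a2 Y1)"
    using coequalize_equal_values[OF c(1) intR_arrow_subset[OF c(2) X1] intR_arrow_subset[OF c(3) Y1]]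
    by blast
  have b1: "intR_arrow k g N1 h1 (q1 \<circ> a1)" by (rule intR_arrow_comp[OF c(2) q1(2)])
  have b2: "intR_arrow k' g' N1 h1 (q1 \<circ> a2)" by (rule intR_arrow_comp[OF c(3) q1(2)])
  have "h1 ((q1 \<circ> a1) X2) = h1 ((q1 \<circ> a2) Y2)"
    using intR_arrow_apply[OF b1 X2] intR_arrow_apply[OF b2 Y2] eq2 by simp
  then obtain N2 h2 q2 where q2: "mor N2 h2" "intR_arrow N1 h1 N2 h2 q2"
      "q2 ((q1 \<circ> a1) X2) = q2 ((q1 \<circ> a2) Y2)"
    using coequalize_equal_values[OF q1(1) intR_arrow_subset[OF b1 X2] intR_arrow_subset[OF b2 Y2]]
    by blast
  have "intR_arrow k g N2 h2 (q2 \<circ> (q1 \<circ> a1))" "intR_arrow k' g' N2 h2 (q2 \<circ> (q1 \<circ> a2))"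
    using intR_arrow_comp[OF b1 q2(2)] intR_arrow_comp[OF b2 q2(2)] .
  moreover have "(q2 \<circ> (q1 \<circ> a1)) X1 = (q2 \<circ> (q1 \<circ> a2)) Y1" using q1(3) by simp
  moreover have "(q2 \<circ> (q1 \<circ> a1)) X2 = (q2 \<circ> (q1 \<circ> a2)) Y2" using q2(3) by simp
  ultimately show ?thesis using q2(1) by blast
qed

lemma common_representation:
  assumes x: "x \<in> A" and y: "y \<in> A" and w: "w \<in> A"
  obtains k g X Y W where "mor k g" "X \<subseteq> {1..k}" "Y \<subseteq> {1..k}" "W \<subseteq> {1..k}"
    "x = g X" "y = g Y" "w = g W"
proof -
  have rep: "mor 2 (ortho_pair a)" "ortho_pair a {1} = a" if "a \<in> A" for a
    using mor_ortho_pair[OF that] by (simp_all add: ortho_pair_def)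
  obtain m h f1 f2 where s: "mor m h" "intR_arrow 2 (ortho_pair x) m h f1" "intR_arrow 2 (ortho_pair y) m h f2"
    using cospan_exists[OF rep(1)[OF x] rep(1)[OF y]] by blast
  obtain k l p f3 where t: "mor k l" "intR_arrow m h k l p" "intR_arrow 2 (ortho_pair w) k l f3"
    using cospan_exists[OF s(1) rep(1)[OF w]] by blast
  have a1: "intR_arrow 2 (ortho_pair x) k l (p \<circ> f1)" and a2: "intR_arrow 2 (ortho_pair y) k l (p \<circ> f2)"
    using intR_arrow_comp[OF s(2) t(2)] intR_arrow_comp[OF s(3) t(2)] .
  have one: "{1} \<subseteq> {1..2::nat}" by simp
  show ?thesis
  proof (rule that[OF t(1) intR_arrow_subset[OF a1 one] intR_arrow_subset[OF a2 one]
        intR_arrow_subset[OF t(3) one]])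
    show "x = l ((p \<circ> f1) {1})" "y = l ((p \<circ> f2) {1})" "w = l (f3 {1})"
      using intR_arrow_apply[OF a1 one] intR_arrow_apply[OF a2 one] intR_arrow_apply[OF t(3) one]
        rep(2) x y w by simp_all
  qed
qed

(* lifted (\<inter>) and lifted (\<union>) will be the meet and the join of A *)
definition lifted :: "(nat set \<Rightarrow> nat set \<Rightarrow> nat set) \<Rightarrow> 'a \<Rightarrow> 'a \<Rightarrow> 'a" where
  "lifted op a b = (SOME c. \<exists>k g X Y. mor k g \<and> X \<subseteq> {1..k} \<and> Y \<subseteq> {1..k} \<and>
     g X = a \<and> g Y = b \<and> c = g (op X Y))"

lemma lifted_eq:
  assumes preserved: "\<And>n m f X Y. bool_mor_fin n m f \<Longrightarrow> X \<subseteq> {1..n} \<Longrightarrow> Y \<subseteq> {1..n} \<Longrightarrow>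
      f (op X Y) = op (f X) (f Y)"
    and closed: "\<And>n X Y. X \<subseteq> {1..n} \<Longrightarrow> Y \<subseteq> {1..n} \<Longrightarrow> op X Y \<subseteq> {1..n}"
    and m: "mor k g" and X: "X \<subseteq> {1..k}" and Y: "Y \<subseteq> {1..k}"
  shows "lifted op (g X) (g Y) = g (op X Y)"
proof -
  let ?P = "\<lambda>c. \<exists>k' g' X' Y'. mor k' g' \<and> X' \<subseteq> {1..k'} \<and> Y' \<subseteq> {1..k'} \<and>
     g' X' = g X \<and> g' Y' = g Y \<and> c = g' (op X' Y')"
  have "?P (g (op X Y))" using m X Y by blast
  then have "?P (lifted op (g X) (g Y))" unfolding lifted_def by (rule someI)
  then obtain k' g' X' Y' where m': "mor k' g'" and X': "X' \<subseteq> {1..k'}" and Y': "Y' \<subseteq> {1..k'}"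
    and eq: "g' X' = g X" "g' Y' = g Y" and val: "lifted op (g X) (g Y) = g' (op X' Y')"
    by blast
  obtain K G f f' where c: "mor K G" "intR_arrow k g K G f" "intR_arrow k' g' K G f'"
    "f X = f' X'" "f Y = f' Y'"
    using merge_representations[OF m m' X Y X' Y'] eq by metis
  have hom: "bool_mor_fin k K f" "bool_mor_fin k' K f'"
    using c(2,3) by (simp_all add: intR_arrow_def)
  have "g (op X Y) = G (f (op X Y))" using intR_arrow_apply[OF c(2) closed[OF X Y]] by simp
  also have "\<dots> = G (op (f X) (f Y))" using preserved[OF hom(1) X Y] by simp
  also have "\<dots> = G (op (f' X') (f' Y'))" using c(4,5) by simp
  also have "\<dots> = G (f' (op X' Y'))" using preserved[OF hom(2) X' Y'] by simp
  also have "\<dots> = g' (op X' Y')" using intR_arrow_apply[OF c(3) closed[OF X' Y']] .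
  finally show ?thesis using val by simp
qed

lemma lifted_Int: "mor k g \<Longrightarrow> X \<subseteq> {1..k} \<Longrightarrow> Y \<subseteq> {1..k} \<Longrightarrow> lifted (\<inter>) (g X) (g Y) = g (X \<inter> Y)"
  by (rule lifted_eq) (auto simp: bool_mor_fin_def)

lemma lifted_Un: "mor k g \<Longrightarrow> X \<subseteq> {1..k} \<Longrightarrow> Y \<subseteq> {1..k} \<Longrightarrow> lifted (\<union>) (g X) (g Y) = g (X \<union> Y)"
  by (rule lifted_eq) (auto simp: bool_mor_fin_def)

lemma boolean_algebra_lifted: "boolean_algebra_on A (lifted (\<inter>)) (lifted (\<union>)) ortho z u"
proof -
  let ?mt = "lifted (\<inter>)" and ?jn = "lifted (\<union>)"
  have laws: "?mt x y \<in> A \<and> ?jn x y \<in> A \<and> ?mt x y = ?mt y x \<and> ?jn x y = ?jn y x \<and>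
      ?mt (?mt x y) w = ?mt x (?mt y w) \<and> ?jn (?jn x y) w = ?jn x (?jn y w) \<and>
      ?mt x (?jn x y) = x \<and> ?jn x (?mt x y) = x \<and> ?mt x (?jn y w) = ?jn (?mt x y) (?mt x w) \<and>
      ?jn x z = x \<and> ?mt x u = x \<and> ?mt x (ortho x) = z \<and> ?jn x (ortho x) = u"
    if xyw: "x \<in> A" "y \<in> A" "w \<in> A" for x y w
  proof -
    obtain k g X Y W where g: "mor k g" and sub: "X \<subseteq> {1..k}" "Y \<subseteq> {1..k}" "W \<subseteq> {1..k}"
      and val: "x = g X" "y = g Y" "w = g W"
      using common_representation[OF xyw] .
    have ops: "?mt (g S) (g T) = g (S \<inter> T)" "?jn (g S) (g T) = g (S \<union> T)"
      if "S \<subseteq> {1..k}" "T \<subseteq> {1..k}" for S T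
      using lifted_Int[OF g that] lifted_Un[OF g that] by simp_all
    have compl: "{1..k} - X \<subseteq> {1..k}" by blast
    have "?jn x z = x" using ops(2)[OF sub(1), of "{}"] mor_empty[OF g] val(1) by simp
    moreover have "?mt x u = x"
      using ops(1)[OF sub(1) order_refl] mor_top[OF g] val(1) sub(1) by (simp add: Int_absorb2)
    moreover have "?mt x (ortho x) = z"
      using ops(1)[OF sub(1) compl] mor_compl[OF g sub(1)] mor_empty[OF g] val(1) by simp
    moreover have "?jn x (ortho x) = u"
      using ops(2)[OF sub(1) compl] mor_compl[OF g sub(1)] mor_top[OF g] val(1) sub(1)
      by (simp add: Un_absorb1)
    ultimately show ?thesis
      unfolding val using sub
      by (simp add: ops le_infI1 mor_in[OF g] Int_ac Un_ac Int_Un_distrib)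
  qed
  show ?thesis
    unfolding boolean_algebra_on_def by (intro conjI ballI) (use laws zero_in one_in ortho_in in metis)+
qed

lemma pl_eq_lifted:
  assumes x: "x \<in> A" and y: "y \<in> A"
  shows "pl x y = (if lifted (\<inter>) x y = z then Some (lifted (\<union>) x y) else None)"
proof (cases "pl x y")
  case (Some e)
  have m: "mor 3 (ortho_triple x y e)" by (rule mor_ortho_triple[OF x y Some])
  have "{1} \<subseteq> {1..3::nat}" "{2} \<subseteq> {1..3::nat}" by auto
  from lifted_Int[OF m this] lifted_Un[OF m this] show ?thesis
    using Some by (simp add: ortho_triple_def)
next
  case None
  obtain k g X Y W where g: "mor k g" and sub: "X \<subseteq> {1..k}" "Y \<subseteq> {1..k}"
    and val: "x = g X" "y = g Y"
    using common_representation[OF x y y] .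
  have "g (X \<inter> Y) \<noteq> z"
  proof
    (* if X \<inter> Y is null, then g X = g (X - Y) would be summable with g Y *)
    assume null: "g (X \<inter> Y) = z"
    have "pl (g (X - Y)) (g (X \<inter> Y)) = Some (g ((X - Y) \<union> (X \<inter> Y)))"
      using sub by (intro mor_pl[OF g]) auto
    then have "g X = g (X - Y)"
      using null pl_zero_right[OF mor_in[OF g, of "X - Y"]] sub by (auto simp: Un_Diff_Int)
    moreover have "pl (g (X - Y)) (g Y) = Some (g ((X - Y) \<union> Y))"
      using sub by (intro mor_pl[OF g]) auto
    ultimately show False using None val by simp
  qed
  then show ?thesis using None lifted_Int[OF g sub] val by simp
qed

lemma filtered_imp_boolean: "is_boolean_EA A pl z u"
  unfolding is_boolean_EA_def using boolean_algebra_lifted pl_eq_lifted by blast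

end

theorem mainTheorem4:
  fixes A :: "'a set" and pl :: "'a \<Rightarrow> 'a \<Rightarrow> 'a option" and z u :: 'a
  assumes "effect_algebra A pl z u"
  shows "is_boolean_EA A pl z u \<longleftrightarrow> intR_filtered A pl u"
proof
  assume "is_boolean_EA A pl z u"
  then show "intR_filtered A pl u" by (rule boolean_imp_filtered)
next
  assume "intR_filtered A pl u"
  with assms interpret filtered_ea A pl z u by unfold_locales
  show "is_boolean_EA A pl z u" by (rule filtered_imp_boolean)
qed

end
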